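(* Let $K\ge 1$ and $q\ge 2$ be integers, and let $i\neq j$ be two elements of the alphabet $\{0,1,\dots,q-1\}$. For $p\in\{1,\dots,K\}$ let $$\mathcal{S}^{(p)}_{i,j}=\bigl\{(\bm m+p\,\bm e_i,\ \bm m+p\,\bm e_j)\ :\ \bm m\in\mathbb{N}_0^{q},\ \textstyle\sum_{\ell=0}^{q-1}m_\ell=K-p\bigr\},$$ and let $\mathcal{S}_{i,j}=\bigcup_{p=1}^{K}\mathcal{S}^{(p)}_{i,j}$. Then $$|\mathcal{S}_{i,j}|=\binom{K+q-1}{q}.$$
   Context: $K$ nodes each hold a quantized value in the alphabet $\{0,1,\dots,q-1\}$. For a symmetric function of the nodes' values only the histogram of the input vector matters: the histogram is $\bm h=(h_0,\dots,h_{q-1})\in\mathbb{N}_0^q$ with $h_\ell$ the number of nodes holding value $\ell$, so $\sum_\ell h_\ell=K$. Here $\mathbb{N}_0=\{0,1,2,\dots\}$ and $\bm e_\ell$ denotes the $\ell$-th standard basis vector of $\mathbb{N}_0^q$ (indices $0,\dots,q-1$). The set $\mathcal{S}^{(p)}_{i,j}$ consists of the pairs of histograms of two input configurations that differ in exactly $p$ nodes, each of which holds value $i$ in the first configuration and value $j$ in the second, while the remaining $K-p$ nodes hold identical values in both configurations (the common part being described by the histogram $\bm m$). *)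

theory Defs
  imports Main
begin

text \<open>Histograms in N_0^q are represented as functions nat => nat vanishing
outside the index range {..<q}.\<close>

definition hist_set :: "nat \<Rightarrow> nat \<Rightarrow> (nat \<Rightarrow> nat) set" where
  "hist_set q n = {m. (\<forall>l. q \<le> l \<longrightarrow> m l = 0) \<and> (\<Sum>l<q. m l) = n}"

definition basis_vec :: "nat \<Rightarrow> nat \<Rightarrow> nat" where
  "basis_vec l = (\<lambda>k. if k = l then 1 else 0)"

definition S_p :: "nat \<Rightarrow> nat \<Rightarrow> nat \<Rightarrow> nat \<Rightarrow> nat \<Rightarrow> ((nat \<Rightarrow> nat) \<times> (nat \<Rightarrow> nat)) set" where
  "S_p q K p i j =
     (\<lambda>m. ((\<lambda>k. m k + p * basis_vec i k), (\<lambda>k. m k + p * basis_vec j k))) ` hist_set q (K - p)"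

definition S_all :: "nat \<Rightarrow> nat \<Rightarrow> nat \<Rightarrow> nat \<Rightarrow> ((nat \<Rightarrow> nat) \<times> (nat \<Rightarrow> nat)) set" where
  "S_all q K i j = (\<Union>p\<in>{1..K}. S_p q K p i j)"

end

theory Submission
  imports Defs "HOL-Library.Multiset"
begin

text \<open>A pair (a, b) in S^(p) determines p = a_i - b_i, so the sets S^(p) are pairwise
disjoint, and S^(p) is in bijection with the histograms of K - p nodes, i.e. with the
multisets of size K - p over q letters. Hence the cardinality is the sum over n < K of the
multiset numbers C(q + n - 1, n), which the hockey-stick identity evaluates.\<close>

lemma size_eq_sum_count:
  assumes "finite A" and "set_mset M \<subseteq> A"
  shows "size M = (\<Sum>x\<in>A. count M x)"
  unfolding size_multiset_overloaded_eq
  by (rule sum.mono_neutral_left) (use assms in \<open>auto simp: count_eq_zero_iff\<close>)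

lemma hist_set_eq_image_count:
  "hist_set q n = count ` multisets_of_size {..<q} n"
proof (intro equalityI subsetI)
  fix m assume m: "m \<in> hist_set q n"
  then have support: "{x. 0 < m x} \<subseteq> {..<q}"
    by (auto simp: hist_set_def not_less[symmetric])
  then have "finite {x. 0 < m x}"
    by (rule finite_subset) simp
  then have count_M: "count (Abs_multiset m) = m"
    by simp
  have "set_mset (Abs_multiset m) \<subseteq> {..<q}"
    using support count_M by (auto simp: set_mset_def)
  moreover have "size (Abs_multiset m) = n"
    using m size_eq_sum_count[OF _ calculation] count_M by (simp add: hist_set_def)
  ultimately show "m \<in> count ` multisets_of_size {..<q} n"
    using count_M by (auto simp: multisets_of_size_def intro!: image_eqI[of _ _ "Abs_multiset m"])
next
  fix m assume "m \<in> count ` multisets_of_size {..<q} n"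
  then obtain M where "set_mset M \<subseteq> {..<q}" "size M = n" "m = count M"
    by (auto simp: multisets_of_size_def)
  then show "m \<in> hist_set q n"
    using size_eq_sum_count[of "{..<q}" M] by (auto simp: hist_set_def count_eq_zero_iff)
qed

lemma inj_count: "inj count"
  by (rule injI) (rule multiset_eqI, simp)

lemma finite_hist_set: "finite (hist_set q n)"
  by (auto simp: hist_set_eq_image_count)

lemma card_hist_set: "card (hist_set q n) = (q + n - 1) choose n"
  unfolding hist_set_eq_image_count
  by (simp add: card_image inj_on_subset[OF inj_count] card_multisets_of_size)

lemma card_S_p: "card (S_p q K p i j) = card (hist_set q (K - p))"
  unfolding S_p_def
  by (rule card_image) (auto intro!: inj_onI simp: fun_eq_iff)

lemma S_p_fst_minus_snd:
  assumes "i \<noteq> j" and "(a, b) \<in> S_p q K p i j"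
  shows "a i - b i = p"
  using assms by (auto simp: S_p_def basis_vec_def)

lemma card_S_all:
  assumes "i \<noteq> j"
  shows "card (S_all q K i j) = (\<Sum>n<K. card (hist_set q n))"
proof -
  have "card (S_all q K i j) = (\<Sum>p\<in>{1..K}. card (S_p q K p i j))"
    unfolding S_all_def
  proof (rule card_UN_disjoint)
    show "\<forall>p\<in>{1..K}. finite (S_p q K p i j)"
      by (simp add: S_p_def finite_hist_set)
    show "\<forall>p\<in>{1..K}. \<forall>p'\<in>{1..K}. p \<noteq> p' \<longrightarrow> S_p q K p i j \<inter> S_p q K p' i j = {}"
      by (metis S_p_fst_minus_snd[OF assms] disjoint_iff surj_pair)
  qed simp
  also have "\<dots> = (\<Sum>n<K. card (hist_set q n))"
    unfolding card_S_p
    by (rule sum.reindex_bij_witness[of _ "\<lambda>n. K - n" "\<lambda>p. K - p"]) auto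
  finally show ?thesis .
qed

theorem lemma1:
  fixes K q i j :: nat
  assumes "K \<ge> 1" and "q \<ge> 2" and "i < q" and "j < q" and "i \<noteq> j"
  shows "card (S_all q K i j) = (K + q - 1) choose q"
proof -
  obtain k where K: "K = Suc k"
    using assms(1) by (cases K) auto
  have "card (S_all q K i j) = (\<Sum>n\<le>k. (q - 1 + n) choose n)"
    using assms(2,5) by (simp add: card_S_all card_hist_set K lessThan_Suc_atMost)
  also have "\<dots> = Suc (q - 1 + k) choose k"
    by (rule sum_choose_lower)
  also have "\<dots> = (K + q - 1) choose q"
    using assms(2) binomial_symmetric[of k "k + q"] by (simp add: K add.commute)
  finally show ?thesis .
qed

end
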